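(* Let $W:\mathbb{R}\to\mathbb{R}$ be a bounded, monotone (nondecreasing) solution of $W=\mathcal{A}\Phi'(\mathcal{A}W)$ with $W(\varphi)\to\pm1$ as $\varphi\to\pm\infty$, and set $\widetilde W=W_{\rm sh}-W$. Then for all $\underline\tau,\overline\tau$ with $\underline\tau<\tau_+<\overline\tau$ there exist positive constants $\underline c,\overline c$ such that $$\underline c\,e^{-\overline\tau\varphi}\le\widetilde W(\varphi)\le\overline c\,e^{-\underline\tau\varphi}\qquad\text{for all }\varphi\ge0.$$
   Context: $\Phi:\mathbb{R}\to\mathbb{R}$ is twice continuously differentiable on $[-1,1]$ with $\Phi'(-1)=-1$, $\Phi'(1)=1$, $\Phi''\ge0$ on $[-1,1]$, $\Phi(-1)=\Phi(1)$, $\Phi''(-1)<1$, and $\lambda_+:=\Phi''(1)\in(0,1)$. $(\mathcal{A}U)(\varphi)=\int_{\varphi-1/2}^{\varphi+1/2}U(s)\,ds$; $W_{\rm sh}(\varphi)=\mathrm{sgn}(\varphi)$. $\tau_+>0$ denotes the unique positive real solution of $\tau^2=2\lambda_+(\cosh\tau-1)$. *)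

theory Defs
  imports "HOL-Analysis.Analysis"
begin

definition avgA :: "(real \<Rightarrow> real) \<Rightarrow> real \<Rightarrow> real" where
  "avgA U \<phi> = integral {\<phi> - 1/2 .. \<phi> + 1/2} U"

text \<open>The shock profile W_sh = sgn; at the single point 0 we use the value 1
  (the statement concerns the half-line phi >= 0).\<close>
definition Wsh :: "real \<Rightarrow> real" where
  "Wsh \<phi> = (if \<phi> \<ge> 0 then 1 else -1)"

end

theory Submission
  imports Defs "HOL-Real_Asymp.Real_Asymp"
begin

text \<open>
  In terms of tail = 1 - W the profile equation reads tail = A (Psi (A tail)) with
  Psi x = 1 - Phi' (1 - x), and Psi x \<approx> lam x because tail \<rightarrow> 0. Far out, tail is therefore
  squeezed between (lam - e) A (A tail) and (lam + e) A (A tail). Since A multiplies e^(-t\<phi>) by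
  kappa t, the linearised equation u = lam A (A u) is solved by e^(-t\<phi>) exactly when
  lam (kappa t)^2 = 1, i.e. t = tau_plus. For t < tau_plus the function C e^(-t\<phi>) is a
  supersolution of u = \<theta> A (A u) with some \<theta> \<in> (lam, 1), for t > tau_plus a subsolution with some
  \<theta> < lam, and a maximum principle for A \<circ> A (which needs \<theta> < 1) propagates the comparison from
  a window of length 1 to the whole half-line. The lower bound also uses tail > 0, which follows
  from the equation by looking at a first zero of tail.
\<close>

section \<open>The averaging operator\<close>

lemma avgA_const [simp]: "avgA (\<lambda>_. c) \<phi> = c"
  by (simp add: avgA_def)

lemma avgA_mono:
  assumes "f integrable_on {\<phi>-1/2..\<phi>+1/2}" "g integrable_on {\<phi>-1/2..\<phi>+1/2}"
    and "\<And>s. s \<in> {\<phi>-1/2..\<phi>+1/2} \<Longrightarrow> f s \<le> g s"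
  shows "avgA f \<phi> \<le> avgA g \<phi>"
  unfolding avgA_def using assms by (rule integral_le)

lemma avgA_le_const:
  assumes "f integrable_on {\<phi>-1/2..\<phi>+1/2}" "\<And>s. s \<in> {\<phi>-1/2..\<phi>+1/2} \<Longrightarrow> f s \<le> M"
  shows "avgA f \<phi> \<le> M"
  using avgA_mono[of f \<phi> "\<lambda>_. M"] assms by (simp add: integrable_on_const)

lemma avgA_ge_const:
  assumes "f integrable_on {\<phi>-1/2..\<phi>+1/2}" "\<And>s. s \<in> {\<phi>-1/2..\<phi>+1/2} \<Longrightarrow> M \<le> f s"
  shows "M \<le> avgA f \<phi>"
  using avgA_mono[of "\<lambda>_. M" \<phi> f] assms by (simp add: integrable_on_const)

lemma avgA_diff:
  assumes "f integrable_on {\<phi>-1/2..\<phi>+1/2}" "g integrable_on {\<phi>-1/2..\<phi>+1/2}"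
  shows "avgA (\<lambda>s. f s - g s) \<phi> = avgA f \<phi> - avgA g \<phi>"
  unfolding avgA_def using assms by (rule integral_diff)

lemma avgA_cmult: "avgA (\<lambda>s. c * f s) \<phi> = c * avgA f \<phi>"
  by (simp add: avgA_def)

lemma avgA_lipschitz:
  fixes f :: "real \<Rightarrow> real"
  assumes int: "\<And>a b. f integrable_on {a..b}"
    and bound: "\<And>t. t \<in> {a-1/2..b+1/2} \<Longrightarrow> \<bar>f t\<bar> \<le> B" and "0 \<le> B"
  shows "(2*B)-lipschitz_on {a..b} (avgA f)"
proof -
  have integral_bound: "\<bar>integral {c..d} f\<bar> \<le> B * (d - c)"
    if "{c..d} \<subseteq> {a-1/2..b+1/2}" "c \<le> d" for c d
  proof -
    have "norm (integral {c..d} f) \<le> integral {c..d} (\<lambda>_. B)"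
      by (rule integral_norm_bound_integral) (use int bound that in auto)
    then show ?thesis using that by (simp add: mult.commute)
  qed
  have ordered: "\<bar>avgA f y - avgA f x\<bar> \<le> 2*B*(y-x)" if "x \<in> {a..b}" "y \<in> {a..b}" "x \<le> y" for x y
  proof -
    have "integral {x-1/2..x+1/2} f + integral {x+1/2..y+1/2} f
        = integral {x-1/2..y-1/2} f + integral {y-1/2..y+1/2} f"
      using that int by (simp add: Henstock_Kurzweil_Integration.integral_combine)
    then have "avgA f y - avgA f x = integral {x+1/2..y+1/2} f - integral {x-1/2..y-1/2} f"
      unfolding avgA_def by linarith
    moreover have "\<bar>integral {x+1/2..y+1/2} f\<bar> \<le> B*(y-x)" "\<bar>integral {x-1/2..y-1/2} f\<bar> \<le> B*(y-x)"
      using integral_bound[of "x+1/2" "y+1/2"] integral_bound[of "x-1/2" "y-1/2"] that by simp_all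
    ultimately show ?thesis by (simp add: abs_le_iff)
  qed
  show ?thesis
  proof (rule lipschitz_onI)
    fix x y assume "x \<in> {a..b}" "y \<in> {a..b}"
    then show "dist (avgA f x) (avgA f y) \<le> 2*B * dist x y"
      using ordered[of x y] ordered[of y x] by (cases "x \<le> y") (auto simp: dist_real_def abs_minus_commute)
  qed (use \<open>0 \<le> B\<close> in simp)
qed

lemma continuous_on_avgA_locally_bounded:
  fixes f :: "real \<Rightarrow> real"
  assumes int: "\<And>a b. f integrable_on {a..b}" and bdd: "\<And>a b. bounded (f ` {a..b})"
  shows "continuous_on UNIV (avgA f)"
proof -
  have "isCont (avgA f) x" for x
  proof -
    obtain B where "B > 0" and B: "\<And>t. t \<in> {x-3/2..x+3/2} \<Longrightarrow> \<bar>f t\<bar> \<le> B"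
      using bdd[of "x-3/2" "x+3/2"] by (auto simp: bounded_pos)
    then have "(2*B)-lipschitz_on {x-1..x+1} (avgA f)"
      by (intro avgA_lipschitz int) auto
    then have "continuous_on {x-1..x+1} (avgA f)"
      by (rule lipschitz_on_continuous_on)
    then show ?thesis
      by (rule continuous_on_interior) simp
  qed
  then show ?thesis
    by (simp add: continuous_at_imp_continuous_on)
qed

lemma integrable_on_Icc_if_continuous:
  "continuous_on UNIV (f :: real \<Rightarrow> real) \<Longrightarrow> f integrable_on {a..b}"
  by (rule integrable_continuous_interval) (use continuous_on_subset in blast)

lemma continuous_on_avgA:
  fixes f :: "real \<Rightarrow> real"
  assumes "continuous_on UNIV f"
  shows "continuous_on UNIV (avgA f)"
proof (rule continuous_on_avgA_locally_bounded)
  show "f integrable_on {a..b}" for a b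
    using assms by (rule integrable_on_Icc_if_continuous)
  show "bounded (f ` {a..b})" for a b
    by (intro compact_imp_bounded compact_continuous_image continuous_on_subset[OF assms]) auto
qed

lemma avgA_pos:
  fixes f :: "real \<Rightarrow> real"
  assumes f: "continuous_on UNIV f" and nonneg: "\<And>s. s \<in> {\<phi>-1/2..\<phi>+1/2} \<Longrightarrow> 0 \<le> f s"
    and c: "c \<in> {\<phi>-1/2..\<phi>+1/2}" "f c > 0"
  shows "avgA f \<phi> > 0"
proof -
  have "continuous_on (cbox (\<phi>-1/2) (\<phi>+1/2)) f"
    using f continuous_on_subset by blast
  moreover have "box (\<phi>-1/2) (\<phi>+1/2) \<noteq> {}"
    by (simp add: box_real)
  ultimately have "integral (cbox (\<phi>-1/2) (\<phi>+1/2)) f = 0 \<longleftrightarrow> (\<forall>x \<in> cbox (\<phi>-1/2) (\<phi>+1/2). f x = 0)"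
    using nonneg by (intro integral_cbox_eq_0_iff) (simp_all add: cbox_interval)
  then have "avgA f \<phi> \<noteq> 0"
    using c by (auto simp: avgA_def cbox_interval)
  moreover have "0 \<le> avgA f \<phi>"
    using nonneg by (intro avgA_ge_const integrable_on_Icc_if_continuous f)
  ultimately show ?thesis
    by simp
qed

lemma avgA_avgA_diff:
  assumes f: "continuous_on UNIV f" and g: "continuous_on UNIV g"
  shows "avgA (avgA (\<lambda>s. f s - g s)) \<phi> = avgA (avgA f) \<phi> - avgA (avgA g) \<phi>"
proof -
  have "avgA (\<lambda>s. f s - g s) = (\<lambda>s. avgA f s - avgA g s)"
    using f g by (intro ext avgA_diff integrable_on_Icc_if_continuous)
  moreover have "avgA (\<lambda>s. avgA f s - avgA g s) \<phi> = avgA (avgA f) \<phi> - avgA (avgA g) \<phi>"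
    using f g by (intro avgA_diff integrable_on_Icc_if_continuous continuous_on_avgA)
  ultimately show ?thesis
    by simp
qed

section \<open>A maximum principle and comparison with exponentials\<close>

text \<open>A positive maximum of z on [R - 1, \<infinity>) would lie beyond R, where A (A z) cannot exceed it;
  this contradicts \<theta> < 1.\<close>
lemma avgA_avgA_maximum_principle:
  fixes z :: "real \<Rightarrow> real"
  assumes z: "continuous_on UNIV z" and lim: "(z \<longlongrightarrow> l) at_top" "l \<le> 0"
    and \<theta>: "0 \<le> \<theta>" "\<theta> < 1"
    and base: "\<And>x. x \<in> {R-1..R} \<Longrightarrow> z x \<le> 0"
    and sub: "\<And>x. x > R \<Longrightarrow> z x \<le> \<theta> * avgA (avgA z) x"
    and "x \<ge> R-1"
  shows "z x \<le> 0"
proof (rule ccontr)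
  assume "\<not> z x \<le> 0"
  then have "z x > 0" by simp
  then have "eventually (\<lambda>y. z y < z x) at_top"
    using order_tendstoD(2)[OF lim(1)] lim(2) by simp
  then obtain T where T: "\<And>y. y \<ge> T \<Longrightarrow> z y < z x"
    by (auto simp: eventually_at_top_linorder)
  have x_in: "x \<in> {R-1..max T x}"
    using \<open>x \<ge> R-1\<close> by simp
  obtain p where p: "p \<in> {R-1..max T x}" "\<And>y. y \<in> {R-1..max T x} \<Longrightarrow> z y \<le> z p"
    using continuous_attains_sup[of "{R-1..max T x}" z] continuous_on_subset[OF z] x_in by blast
  have max: "z y \<le> z p" if "y \<ge> R-1" for y
  proof (cases "y \<le> max T x")
    case False
    then have "z y < z x" using T by simp
    then show ?thesis using p(2)[OF x_in] by simp
  qed (use p that in simp)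
  have "z p > 0"
    using max[of x] \<open>z x > 0\<close> \<open>x \<ge> R-1\<close> by simp
  with base p(1) have "p > R"
    by force
  have "avgA (avgA z) p \<le> z p"
  proof (rule avgA_le_const)
    show "avgA z integrable_on {p-1/2..p+1/2}"
      by (intro integrable_on_Icc_if_continuous continuous_on_avgA z)
    fix s assume s: "s \<in> {p-1/2..p+1/2}"
    show "avgA z s \<le> z p"
      by (rule avgA_le_const) (use integrable_on_Icc_if_continuous[OF z] s \<open>p > R\<close> max in auto)
  qed
  then have "\<theta> * avgA (avgA z) p \<le> \<theta> * z p"
    using \<theta> by (simp add: mult_left_mono)
  also have "\<dots> < z p"
    using \<theta> \<open>z p > 0\<close> by simp
  finally show False
    using sub[OF \<open>p > R\<close>] by simp
qed

text \<open>A multiplies e^(-t\<phi>) by kappa t, and the defining equation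
  tau_plus^2 = 2 lam (cosh tau_plus - 1) of tau_plus says lam (kappa tau_plus)^2 = 1.\<close>
definition kappa :: "real \<Rightarrow> real" where
  "kappa t = (exp (t/2) - exp (-t/2)) / t"

lemma avgA_exp:
  assumes "t \<noteq> 0"
  shows "avgA (\<lambda>s. exp (-t * s)) \<phi> = kappa t * exp (-t * \<phi>)"
proof -
  have "((\<lambda>s. exp (-t * s)) has_integral (- exp (-t * (\<phi>+1/2))/t) - (- exp (-t * (\<phi>-1/2))/t)) {\<phi>-1/2..\<phi>+1/2}"
  proof (rule fundamental_theorem_of_calculus)
    fix x assume "x \<in> {\<phi>-1/2..\<phi>+1/2}"
    have "((\<lambda>s. - exp (-t * s)/t) has_real_derivative exp (-t * x)) (at x within {\<phi>-1/2..\<phi>+1/2})"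
      using assms by (auto intro!: derivative_eq_intros)
    then show "((\<lambda>s. - exp (-t * s)/t) has_vector_derivative exp (-t * x)) (at x within {\<phi>-1/2..\<phi>+1/2})"
      by (simp add: has_real_derivative_iff_has_vector_derivative)
  qed simp
  moreover have "(- exp (-t * (\<phi>+1/2))/t) - (- exp (-t * (\<phi>-1/2))/t) = kappa t * exp (-t * \<phi>)"
    using assms by (simp add: kappa_def field_simps flip: exp_add)
  ultimately show ?thesis
    unfolding avgA_def by (simp add: integral_unique)
qed

lemma avgA_avgA_exp:
  assumes "t \<noteq> 0"
  shows "avgA (avgA (\<lambda>s. C * exp (-t * s))) \<phi> = C * (kappa t)\<^sup>2 * exp (-t * \<phi>)"
proof -
  have inner: "avgA (\<lambda>s. C * exp (-t * s)) = (\<lambda>s. (C * kappa t) * exp (-t * s))" for C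
    using avgA_cmult[of C "\<lambda>s. exp (-t * s)"] avgA_exp[OF assms] by (intro ext) simp
  show ?thesis
    by (simp only: inner) (simp add: power2_eq_square mult_ac)
qed

lemma kappa_pos: "t > 0 \<Longrightarrow> kappa t > 0"
  by (simp add: kappa_def)

lemma kappa_sq: "t \<noteq> 0 \<Longrightarrow> (kappa t)\<^sup>2 = 2 * (cosh t - 1) / t\<^sup>2"
  by (simp add: kappa_def cosh_def power2_eq_square power_divide field_simps flip: exp_add)

lemma kappa_strict_mono:
  assumes "0 < a" "a < b"
  shows "kappa a < kappa b"
proof -
  define N where "N x = x * (exp (x/2) + exp (-x/2)) - 2 * (exp (x/2) - exp (-x/2))" for x :: real
  have N_deriv: "(N has_real_derivative x * (exp (x/2) - exp (-x/2)) / 2) (at x)" for x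
    unfolding N_def by (auto intro!: derivative_eq_intros simp: field_simps)
  have N_pos: "N x > 0" if "x > 0" for x
  proof -
    have "N 0 < N x"
    proof (rule DERIV_pos_imp_increasing_open[OF that])
      fix y :: real assume "0 < y" "y < x"
      then show "\<exists>d. (N has_real_derivative d) (at y) \<and> d > 0"
        using N_deriv by (intro exI[of _ "y * (exp (y/2) - exp (-y/2)) / 2"]) auto
    qed (unfold N_def, intro continuous_intros, simp_all)
    then show ?thesis by (simp add: N_def)
  qed
  have kappa_deriv: "(kappa has_real_derivative N x / (2 * x\<^sup>2)) (at x)" if "x \<noteq> 0" for x
  proof -
    have "((\<lambda>x. (exp (x/2) - exp (-x/2)) / x) has_real_derivative N x / (2 * x\<^sup>2)) (at x)"
      using that by (auto intro!: derivative_eq_intros simp: N_def field_simps power2_eq_square)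
    then show ?thesis by (simp add: kappa_def[abs_def])
  qed
  show ?thesis
  proof (rule DERIV_pos_imp_increasing_open[OF \<open>a < b\<close>])
    fix y :: real assume "a < y" "y < b"
    then show "\<exists>d. (kappa has_real_derivative d) (at y) \<and> d > 0"
      using assms kappa_deriv[of y] N_pos[of y] by (intro exI[of _ "N y / (2 * y\<^sup>2)"]) auto
  next
    show "continuous_on {a..b} kappa"
      using assms kappa_deriv[THEN DERIV_isCont] by (intro continuous_at_imp_continuous_on) auto
  qed
qed

lemma kappa_sq_strict_mono:
  assumes "0 < a" "a < b"
  shows "(kappa a)\<^sup>2 < (kappa b)\<^sup>2"
  using kappa_strict_mono[OF assms] kappa_pos[OF \<open>0 < a\<close>] by (intro power_strict_mono) auto

lemma kappa_sq_char_eq: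
  assumes "\<tau> > 0" "\<tau>\<^sup>2 = 2 * l * (cosh \<tau> - 1)"
  shows "l * (kappa \<tau>)\<^sup>2 = 1"
  using assms by (simp add: kappa_sq field_simps)

lemma tendsto_exp_decay:
  fixes t C :: real
  assumes "t > 0"
  shows "((\<lambda>x. C * exp (-t * x)) \<longlongrightarrow> 0) at_top"
proof -
  have "((\<lambda>x. exp (-t * x)) \<longlongrightarrow> 0) at_top"
    using assms by real_asymp
  then show ?thesis
    by (rule tendsto_mult_right_zero)
qed

lemma le_exp_if_subsolution:
  fixes u :: "real \<Rightarrow> real"
  assumes u: "continuous_on UNIV u" "(u \<longlongrightarrow> 0) at_top"
    and "t > 0" "0 \<le> C" and \<theta>: "0 \<le> \<theta>" "\<theta> < 1" "\<theta> * (kappa t)\<^sup>2 \<le> 1"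
    and sub: "\<And>x. x > R \<Longrightarrow> u x \<le> \<theta> * avgA (avgA u) x"
    and base: "\<And>x. x \<in> {R-1..R} \<Longrightarrow> u x \<le> C * exp (-t * x)"
    and "x \<ge> R - 1"
  shows "u x \<le> C * exp (-t * x)"
proof -
  define z where "z y = u y - C * exp (-t * y)" for y
  have exp_cont: "continuous_on UNIV (\<lambda>y. C * exp (-t * y))"
    by (intro continuous_intros)
  have t0: "t \<noteq> 0"
    using \<open>t > 0\<close> by simp
  have "z x \<le> 0"
  proof (rule avgA_avgA_maximum_principle[where z=z and R=R and \<theta>=\<theta>])
    show "continuous_on UNIV z"
      unfolding z_def[abs_def] by (intro continuous_intros u)
    show "(z \<longlongrightarrow> 0 - 0) at_top"
      unfolding z_def[abs_def] by (intro tendsto_diff u tendsto_exp_decay \<open>t > 0\<close>)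
    show "z y \<le> \<theta> * avgA (avgA z) y" if "y > R" for y
    proof -
      define E where "E = C * exp (-t * y)"
      have "\<theta> * avgA (avgA z) y = \<theta> * avgA (avgA u) y - (\<theta> * (kappa t)\<^sup>2) * E"
        unfolding z_def[abs_def] avgA_avgA_diff[OF u(1) exp_cont] avgA_avgA_exp[OF t0, of C y]
        by (simp add: E_def algebra_simps)
      moreover have "(\<theta> * (kappa t)\<^sup>2) * E \<le> E"
        using mult_right_mono[OF \<theta>(3), of E] \<open>0 \<le> C\<close> by (simp add: E_def)
      ultimately show ?thesis
        using sub[OF that] by (simp add: z_def E_def)
    qed
  qed (use \<theta> base \<open>x \<ge> R - 1\<close> in \<open>auto simp: z_def\<close>)
  then show ?thesis
    by (simp add: z_def)
qed

lemma exp_le_if_supersolution: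
  fixes u :: "real \<Rightarrow> real"
  assumes u: "continuous_on UNIV u" "(u \<longlongrightarrow> 0) at_top"
    and "t > 0" "0 \<le> c" and \<theta>: "0 \<le> \<theta>" "\<theta> < 1" "1 \<le> \<theta> * (kappa t)\<^sup>2"
    and super: "\<And>x. x > R \<Longrightarrow> \<theta> * avgA (avgA u) x \<le> u x"
    and base: "\<And>x. x \<in> {R-1..R} \<Longrightarrow> c * exp (-t * x) \<le> u x"
    and "x \<ge> R - 1"
  shows "c * exp (-t * x) \<le> u x"
proof -
  define z where "z y = c * exp (-t * y) - u y" for y
  have exp_cont: "continuous_on UNIV (\<lambda>y. c * exp (-t * y))"
    by (intro continuous_intros)
  have t0: "t \<noteq> 0"
    using \<open>t > 0\<close> by simp
  have "z x \<le> 0"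
  proof (rule avgA_avgA_maximum_principle[where z=z and R=R and \<theta>=\<theta>])
    show "continuous_on UNIV z"
      unfolding z_def[abs_def] by (intro continuous_intros u)
    show "(z \<longlongrightarrow> 0 - 0) at_top"
      unfolding z_def[abs_def] by (intro tendsto_diff u tendsto_exp_decay \<open>t > 0\<close>)
    show "z y \<le> \<theta> * avgA (avgA z) y" if "y > R" for y
    proof -
      define E where "E = c * exp (-t * y)"
      have "\<theta> * avgA (avgA z) y = (\<theta> * (kappa t)\<^sup>2) * E - \<theta> * avgA (avgA u) y"
        unfolding z_def[abs_def] avgA_avgA_diff[OF exp_cont u(1)] avgA_avgA_exp[OF t0, of c y]
        by (simp add: E_def algebra_simps)
      moreover have "E \<le> (\<theta> * (kappa t)\<^sup>2) * E"
        using mult_right_mono[OF \<theta>(3), of E] \<open>0 \<le> c\<close> by (simp add: E_def)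
      ultimately show ?thesis
        using super[OF that] by (simp add: z_def E_def)
    qed
  qed (use \<theta> base \<open>x \<ge> R - 1\<close> in \<open>auto simp: z_def\<close>)
  then show ?thesis
    by (simp add: z_def)
qed

section \<open>The tail of a monotone profile\<close>

lemma linear_approx_at_1:
  fixes f :: "real \<Rightarrow> real"
  assumes "(f has_real_derivative L) (at 1 within {-1..1})" "f 1 = 1" "e > 0"
  shows "\<exists>\<delta>>0. \<forall>x. 0 \<le> x \<and> x \<le> \<delta> \<longrightarrow> \<bar>(1 - f (1-x)) - L*x\<bar> \<le> e*x"
proof -
  have "((\<lambda>y. (f y - f 1) / (y - 1)) \<longlongrightarrow> L) (at 1 within {-1..1})"
    using assms(1) has_field_derivative_iff by blast
  then have "eventually (\<lambda>y. dist ((f y - f 1) / (y - 1)) L < e) (at 1 within {-1..1})"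
    using \<open>e > 0\<close> by (rule tendstoD)
  then obtain d where d: "d > 0"
    "\<And>y. y \<in> {-1..1} \<Longrightarrow> y \<noteq> 1 \<and> dist y 1 < d \<Longrightarrow> dist ((f y - f 1) / (y - 1)) L < e"
    unfolding eventually_at by blast
  have "\<bar>(1 - f (1-x)) - L*x\<bar> \<le> e*x" if "0 < x" "x \<le> min (d/2) 1" for x
  proof -
    have "dist ((f (1-x) - f 1) / ((1-x) - 1)) L < e"
      using that d by (intro d(2)) (auto simp: dist_real_def)
    then have "\<bar>(1 - f (1-x)) / x - L\<bar> < e"
      using \<open>f 1 = 1\<close> by (simp add: dist_real_def minus_divide_left)
    then have "\<bar>((1 - f (1-x)) / x - L) * x\<bar> \<le> e * x"
      using that by (simp add: abs_mult)
    moreover have "((1 - f (1-x)) / x - L) * x = (1 - f (1-x)) - L*x"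
      using that by (simp add: field_simps)
    ultimately show ?thesis
      by simp
  qed
  then have "\<bar>(1 - f (1-x)) - L*x\<bar> \<le> e*x" if "0 \<le> x" "x \<le> min (d/2) 1" for x
    using that \<open>f 1 = 1\<close> by (cases "x = 0") auto
  then show ?thesis
    using d(1) by (intro exI[of _ "min (d/2) 1"]) auto
qed

lemma mono_on_Icc_if_deriv_nonneg:
  fixes f f' :: "real \<Rightarrow> real"
  assumes deriv: "\<And>x. x \<in> {a..b} \<Longrightarrow> (f has_real_derivative f' x) (at x within {a..b})"
    and nonneg: "\<And>x. x \<in> {a..b} \<Longrightarrow> 0 \<le> f' x"
  shows "mono_on {a..b} f"
proof (rule mono_onI)
  fix x y assume "x \<in> {a..b}" "y \<in> {a..b}" "x \<le> y"
  then have "{x..y} \<subseteq> {a..b}"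
    by auto
  have "(f has_derivative (\<lambda>h. f' z * h)) (at z within {x..y})" if "x \<le> z" "z \<le> y" for z
  proof -
    have "z \<in> {a..b}"
      using that \<open>{x..y} \<subseteq> {a..b}\<close> by auto
    then have "(f has_real_derivative f' z) (at z within {x..y})"
      using DERIV_subset[OF deriv \<open>{x..y} \<subseteq> {a..b}\<close>] by blast
    then show ?thesis
      by (rule has_field_derivative_imp_has_derivative)
  qed
  from mvt_very_simple[OF \<open>x \<le> y\<close> this]
  obtain z where "z \<in> {x..y}" "f y - f x = f' z * (y - x)"
    by blast
  moreover have "0 \<le> f' z * (y - x)"
    using nonneg[of z] \<open>z \<in> {x..y}\<close> \<open>{x..y} \<subseteq> {a..b}\<close> \<open>x \<le> y\<close> by (intro mult_nonneg_nonneg) auto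
  ultimately show "f x \<le> f y"
    by linarith
qed

locale monotone_profile =
  fixes Phi' W :: "real \<Rightarrow> real" and lam :: real
  assumes Phi'_cont: "continuous_on {-1..1} Phi'"
    and Phi'_mono: "mono_on {-1..1} Phi'"
    and Phi'_1: "Phi' 1 = 1"
    and Phi'_deriv_1: "(Phi' has_real_derivative lam) (at 1 within {-1..1})"
    and lam: "0 < lam" "lam < 1"
    and W_mono: "mono W"
    and W_fixpoint: "\<And>\<phi>. W \<phi> = avgA (\<lambda>s. Phi' (avgA W s)) \<phi>"
    and W_top: "(W \<longlongrightarrow> 1) at_top"
    and W_bot: "(W \<longlongrightarrow> -1) at_bot"
begin

lemma W_bounds: "W x \<in> {-1..1}"
proof -
  have "eventually (\<lambda>y. W x \<le> W y) at_top"
    unfolding eventually_at_top_linorder using monoD[OF W_mono] by blast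
  then have "W x \<le> 1"
    by (rule tendsto_lowerbound[OF W_top]) simp
  have "eventually (\<lambda>y. W y \<le> W x) at_bot"
    unfolding eventually_at_bot_linorder using monoD[OF W_mono] by blast
  then have "-1 \<le> W x"
    by (rule tendsto_upperbound[OF W_bot]) simp
  with \<open>W x \<le> 1\<close> show ?thesis by simp
qed

lemma W_integrable: "W integrable_on {a..b}"
  by (rule integrable_on_mono_on) (rule mono_imp_mono_on[OF W_mono])

lemma avgA_W_bounds: "avgA W s \<in> {-1..1}"
proof -
  have "avgA W s \<le> 1" "-1 \<le> avgA W s"
    using W_bounds by (intro avgA_le_const avgA_ge_const W_integrable; simp)+
  then show ?thesis by simp
qed

lemma continuous_Phi'_avgA_W: "continuous_on UNIV (\<lambda>s. Phi' (avgA W s))"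
proof -
  have "continuous_on UNIV (avgA W)"
  proof (rule continuous_on_avgA_locally_bounded[OF W_integrable])
    show "bounded (W ` {a..b})" for a b
      using W_bounds by (intro boundedI[of _ 1]) (auto simp: abs_le_iff)
  qed
  then show ?thesis
    using avgA_W_bounds by (intro continuous_on_compose2[OF Phi'_cont]) auto
qed

lemma continuous_W: "continuous_on UNIV W"
proof -
  have "avgA (\<lambda>s. Phi' (avgA W s)) = W"
    using W_fixpoint by (rule ext[symmetric])
  then show ?thesis
    using continuous_on_avgA[OF continuous_Phi'_avgA_W] by simp
qed

definition tail :: "real \<Rightarrow> real" where
  "tail \<phi> = 1 - W \<phi>"

definition Psi :: "real \<Rightarrow> real" where
  "Psi x = 1 - Phi' (1 - x)"

lemma tail_bounds: "tail x \<in> {0..2}"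
  using W_bounds[of x] by (simp add: tail_def)

lemma tail_antimono: "x \<le> y \<Longrightarrow> tail y \<le> tail x"
  using monoD[OF W_mono] by (simp add: tail_def)

lemma continuous_tail: "continuous_on UNIV tail"
  unfolding tail_def[abs_def] by (intro continuous_intros continuous_W)

lemma tail_at_top: "(tail \<longlongrightarrow> 0) at_top"
  unfolding tail_def[abs_def] using tendsto_diff[OF tendsto_const W_top, of 1] by simp

lemma tail_at_bot: "(tail \<longlongrightarrow> 2) at_bot"
  unfolding tail_def[abs_def] using tendsto_diff[OF tendsto_const W_bot, of 1] by simp

lemma avgA_tail: "avgA tail s = 1 - avgA W s"
  unfolding tail_def[abs_def] using avgA_diff[of "\<lambda>_. 1" s W] W_integrable
  by (simp add: integrable_on_const)

lemma avgA_tail_bounds: "avgA tail s \<in> {0..2}"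
  using avgA_W_bounds[of s] by (simp add: avgA_tail)

lemma avgA_tail_le_shift: "avgA tail s \<le> tail (s - 1/2)"
  by (rule avgA_le_const) (auto intro: integrable_on_Icc_if_continuous continuous_tail tail_antimono)

lemma continuous_avgA_tail: "continuous_on UNIV (avgA tail)"
  by (rule continuous_on_avgA[OF continuous_tail])

lemma Psi_nonneg:
  assumes "x \<in> {0..2}"
  shows "0 \<le> Psi x"
proof -
  have "Phi' (1 - x) \<le> Phi' 1"
    using assms by (intro mono_onD[OF Phi'_mono]) auto
  then show ?thesis
    by (simp add: Psi_def Phi'_1)
qed

lemma Psi_avgA_tail: "Psi (avgA tail s) = 1 - Phi' (avgA W s)"
  by (simp add: Psi_def avgA_tail)

lemma continuous_Psi_avgA_tail: "continuous_on UNIV (\<lambda>s. Psi (avgA tail s))"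
  unfolding Psi_avgA_tail by (intro continuous_intros continuous_Phi'_avgA_W)

lemma tail_fixpoint: "tail \<phi> = avgA (\<lambda>s. Psi (avgA tail s)) \<phi>"
proof -
  have "avgA (\<lambda>s. 1 - Phi' (avgA W s)) \<phi> = 1 - avgA (\<lambda>s. Phi' (avgA W s)) \<phi>"
    using avgA_diff[of "\<lambda>_. 1" \<phi> "\<lambda>s. Phi' (avgA W s)"] continuous_Phi'_avgA_W
    by (simp add: integrable_on_const integrable_on_Icc_if_continuous)
  then show ?thesis
    by (simp add: tail_def Psi_avgA_tail flip: W_fixpoint)
qed

lemma Psi_linear_approx:
  assumes "e > 0"
  shows "\<exists>\<delta>>0. \<forall>x. 0 \<le> x \<and> x \<le> \<delta> \<longrightarrow> \<bar>Psi x - lam * x\<bar> \<le> e * x"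
  using linear_approx_at_1[OF Phi'_deriv_1 Phi'_1 assms] by (simp add: Psi_def)

lemma tail_first_zero:
  assumes "tail p = 0"
  obtains s0 where "tail s0 = 0" "\<And>x. x < s0 \<Longrightarrow> tail x > 0"
proof -
  define Z where "Z = {x. tail x = 0}"
  have "closed Z"
    unfolding Z_def by (intro closed_Collect_eq continuous_tail continuous_on_const)
  have "eventually (\<lambda>x. tail x > 1) at_bot"
    using order_tendstoD(1)[OF tail_at_bot] by simp
  then obtain b where b: "\<And>x. x \<le> b \<Longrightarrow> tail x > 1"
    by (auto simp: eventually_at_bot_linorder)
  have "bdd_below Z"
  proof (rule bdd_belowI)
    fix x assume "x \<in> Z"
    then show "b \<le> x"
      using b[of x] by (force simp: Z_def)
  qed
  have "tail (Inf Z) = 0"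
    using closed_contains_Inf[of Z] assms \<open>bdd_below Z\<close> \<open>closed Z\<close> by (auto simp: Z_def)
  moreover have "tail x > 0" if "x < Inf Z" for x
  proof -
    have "x \<notin> Z"
      using cInf_lower[OF _ \<open>bdd_below Z\<close>, of x] that by auto
    then show ?thesis
      using tail_bounds[of x] by (simp add: Z_def)
  qed
  ultimately show ?thesis
    using that by blast
qed

text \<open>If tail vanished somewhere, then at its first zero s0 the source Psi (A tail) would be
  positive somewhere in [s0 - 1/2, s0 + 1/2], since A tail is small and positive just left of
  s0 + 1/2, where Psi x \<approx> lam x. Averaging then gives tail s0 > 0.\<close>
lemma tail_pos: "tail p > 0"
proof (rule ccontr)
  assume "\<not> tail p > 0"
  then have "tail p = 0"
    using tail_bounds[of p] by simp
  then obtain s0 where "tail s0 = 0" and left_pos: "\<And>x. x < s0 \<Longrightarrow> tail x > 0"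
    using tail_first_zero by blast
  obtain \<delta> where "\<delta> > 0" and \<delta>: "\<And>x. 0 \<le> x \<Longrightarrow> x \<le> \<delta> \<Longrightarrow> \<bar>Psi x - lam * x\<bar> \<le> (lam/2) * x"
    using Psi_linear_approx[of "lam/2"] lam by auto
  have "(tail \<longlongrightarrow> 0) (at s0)"
    using continuous_tail \<open>tail s0 = 0\<close> by (metis continuous_on_eq_continuous_at isCont_def open_UNIV UNIV_I)
  then have "eventually (\<lambda>x. tail x < \<delta>) (at s0)"
    using order_tendstoD(2) \<open>\<delta> > 0\<close> by blast
  then obtain r where "r > 0" and r: "\<And>x. x \<noteq> s0 \<Longrightarrow> dist x s0 < r \<Longrightarrow> tail x < \<delta>"
    unfolding eventually_at by auto
  define \<epsilon> where "\<epsilon> = min (r/2) (1/2)"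
  have \<epsilon>: "0 < \<epsilon>" "\<epsilon> \<le> 1/2" "\<epsilon> < r"
    using \<open>r > 0\<close> by (auto simp: \<epsilon>_def)
  define t where "t = s0 + 1/2 - \<epsilon>"
  have "avgA tail t > 0"
    using left_pos[of "s0 - \<epsilon>"] tail_bounds \<epsilon>
    by (intro avgA_pos[OF continuous_tail, of t "s0 - \<epsilon>"]) (auto simp: t_def)
  moreover have "avgA tail t < \<delta>"
    using avgA_tail_le_shift[of t] r[of "s0 - \<epsilon>"] \<epsilon> by (simp add: t_def dist_real_def)
  ultimately have "\<bar>Psi (avgA tail t) - lam * avgA tail t\<bar> \<le> (lam/2) * avgA tail t"
    and "0 < lam * avgA tail t"
    using \<delta>[of "avgA tail t"] lam by simp_all
  then have "Psi (avgA tail t) > 0"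
    unfolding abs_le_iff by linarith
  then have "avgA (\<lambda>s. Psi (avgA tail s)) s0 > 0"
    using Psi_nonneg[OF avgA_tail_bounds] \<epsilon>
    by (intro avgA_pos[OF continuous_Psi_avgA_tail, of s0 t]) (auto simp: t_def)
  then show False
    using tail_fixpoint[of s0] \<open>tail s0 = 0\<close> by simp
qed

lemma tail_eventually_sandwiched:
  assumes "e > 0"
  shows "eventually (\<lambda>\<phi>. (lam - e) * avgA (avgA tail) \<phi> \<le> tail \<phi>
                        \<and> tail \<phi> \<le> (lam + e) * avgA (avgA tail) \<phi>) at_top"
proof -
  obtain \<delta> where "\<delta> > 0" and \<delta>: "\<And>x. 0 \<le> x \<Longrightarrow> x \<le> \<delta> \<Longrightarrow> \<bar>Psi x - lam * x\<bar> \<le> e * x"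
    using Psi_linear_approx[OF assms] by auto
  have "eventually (\<lambda>x. tail x < \<delta>) at_top"
    using order_tendstoD(2)[OF tail_at_top] \<open>\<delta> > 0\<close> by simp
  then obtain R where R: "\<And>x. x \<ge> R \<Longrightarrow> tail x < \<delta>"
    by (auto simp: eventually_at_top_linorder)
  have "(lam - e) * avgA (avgA tail) \<phi> \<le> tail \<phi> \<and> tail \<phi> \<le> (lam + e) * avgA (avgA tail) \<phi>"
    if "\<phi> \<ge> R + 1" for \<phi>
  proof -
    have Psi_bounds: "(lam - e) * avgA tail s \<le> Psi (avgA tail s) \<and> Psi (avgA tail s) \<le> (lam + e) * avgA tail s"
      if "s \<in> {\<phi>-1/2..\<phi>+1/2}" for s
    proof -
      have "avgA tail s \<le> \<delta>"
        using avgA_tail_le_shift[of s] R[of "s - 1/2"] that \<open>\<phi> \<ge> R + 1\<close> by simp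
      then have "\<bar>Psi (avgA tail s) - lam * avgA tail s\<bar> \<le> e * avgA tail s"
        using \<delta> avgA_tail_bounds[of s] by simp
      then show ?thesis
        unfolding abs_le_iff by (simp add: algebra_simps)
    qed
    have int: "(\<lambda>s. c * avgA tail s) integrable_on {\<phi>-1/2..\<phi>+1/2}"
      "(\<lambda>s. Psi (avgA tail s)) integrable_on {\<phi>-1/2..\<phi>+1/2}" for c
      by (intro integrable_on_Icc_if_continuous continuous_intros continuous_avgA_tail
          continuous_Psi_avgA_tail)+
    have "avgA (\<lambda>s. (lam - e) * avgA tail s) \<phi> \<le> avgA (\<lambda>s. Psi (avgA tail s)) \<phi>"
      "avgA (\<lambda>s. Psi (avgA tail s)) \<phi> \<le> avgA (\<lambda>s. (lam + e) * avgA tail s) \<phi>"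
      using Psi_bounds by (intro avgA_mono int; simp)+
    then show ?thesis
      by (simp add: avgA_cmult flip: tail_fixpoint)
  qed
  then show ?thesis
    unfolding eventually_at_top_linorder by blast
qed

lemma tail_exp_upper_bound:
  assumes "t > 0" "lam * (kappa t)\<^sup>2 < 1"
  shows "\<exists>C>0. \<forall>\<phi>. tail \<phi> \<le> C * exp (-t * \<phi>)"
proof -
  define K where "K = (kappa t)\<^sup>2"
  have "K > 0"
    using kappa_pos[OF \<open>t > 0\<close>] by (simp add: K_def)
  have "lam < min 1 (1/K)"
    using assms(2) lam \<open>K > 0\<close> by (simp add: K_def field_simps)
  then obtain \<theta> where "lam < \<theta>" "\<theta> < min 1 (1/K)"
    using dense by blast
  then have \<theta>: "0 \<le> \<theta>" "\<theta> < 1" "\<theta> * (kappa t)\<^sup>2 \<le> 1"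
    using lam \<open>K > 0\<close> by (simp_all add: K_def field_simps)
  obtain R where R: "\<And>\<phi>. \<phi> \<ge> R \<Longrightarrow> tail \<phi> \<le> \<theta> * avgA (avgA tail) \<phi>"
    using tail_eventually_sandwiched[of "\<theta> - lam"] \<open>lam < \<theta>\<close>
    by (auto simp: eventually_at_top_linorder)
  define C where "C = 2 * exp (t * R)"
  have below_R: "tail \<phi> \<le> C * exp (-t * \<phi>)" if "\<phi> \<le> R" for \<phi>
  proof -
    have "C * exp (-t * \<phi>) = 2 * exp (t * (R - \<phi>))"
      by (simp add: C_def algebra_simps flip: exp_add)
    moreover have "1 \<le> exp (t * (R - \<phi>))"
      using \<open>t > 0\<close> that by simp
    moreover have "tail \<phi> \<le> 2"
      using tail_bounds[of \<phi>] by simp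
    ultimately show ?thesis
      by linarith
  qed
  have "tail \<phi> \<le> C * exp (-t * \<phi>)" for \<phi>
  proof (cases "\<phi> \<le> R")
    case False
    show ?thesis
      by (rule le_exp_if_subsolution[OF continuous_tail tail_at_top \<open>t > 0\<close> _ \<theta>, where R=R])
        (use R below_R False in \<open>auto simp: C_def\<close>)
  qed (rule below_R)
  moreover have "C > 0"
    by (simp add: C_def)
  ultimately show ?thesis
    by blast
qed

lemma tail_exp_lower_bound:
  assumes "t > 0" "lam * (kappa t)\<^sup>2 > 1"
  shows "\<exists>c>0. \<forall>\<phi>\<ge>0. c * exp (-t * \<phi>) \<le> tail \<phi>"
proof -
  define K where "K = (kappa t)\<^sup>2"
  have "K > 0"
    using kappa_pos[OF \<open>t > 0\<close>] by (simp add: K_def)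
  have "1/K < lam"
    using assms(2) \<open>K > 0\<close> by (simp add: K_def field_simps)
  then obtain \<theta> where "1/K < \<theta>" "\<theta> < lam"
    using dense by blast
  moreover have "0 < 1/K"
    using \<open>K > 0\<close> by simp
  ultimately have \<theta>: "0 \<le> \<theta>" "\<theta> < 1" "1 \<le> \<theta> * (kappa t)\<^sup>2"
    using lam \<open>K > 0\<close> by (simp_all add: K_def field_simps, linarith+)
  have "eventually (\<lambda>\<phi>. \<theta> * avgA (avgA tail) \<phi> \<le> tail \<phi>) at_top"
    using tail_eventually_sandwiched[of "lam - \<theta>"] \<open>\<theta> < lam\<close> by (auto elim: eventually_mono)
  then obtain R0 where R0: "\<And>\<phi>. \<phi> \<ge> R0 \<Longrightarrow> \<theta> * avgA (avgA tail) \<phi> \<le> tail \<phi>"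
    by (auto simp: eventually_at_top_linorder)
  define R where "R = max R0 1"
  have "R \<ge> 1" and R: "\<And>\<phi>. \<phi> \<ge> R \<Longrightarrow> \<theta> * avgA (avgA tail) \<phi> \<le> tail \<phi>"
    using R0 by (auto simp: R_def)
  define c where "c = tail R"
  have "c > 0"
    by (simp add: c_def tail_pos)
  have below_R: "c * exp (-t * \<phi>) \<le> tail \<phi>" if "0 \<le> \<phi>" "\<phi> \<le> R" for \<phi>
  proof -
    have "c * exp (-t * \<phi>) \<le> c"
      using \<open>t > 0\<close> \<open>c > 0\<close> that by (simp add: mult_le_cancel_left1)
    also have "c \<le> tail \<phi>"
      using tail_antimono[OF \<open>\<phi> \<le> R\<close>] by (simp add: c_def)
    finally show ?thesis .
  qed
  have "c * exp (-t * \<phi>) \<le> tail \<phi>" if "\<phi> \<ge> 0" for \<phi>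
  proof (cases "\<phi> \<le> R")
    case False
    show ?thesis
      by (rule exp_le_if_supersolution[OF continuous_tail tail_at_top \<open>t > 0\<close> _ \<theta>, where R=R])
        (use R below_R \<open>R \<ge> 1\<close> \<open>c > 0\<close> False in auto)
  qed (rule below_R[OF that])
  then show ?thesis
    using \<open>c > 0\<close> by blast
qed

lemma tail_exp_bounds:
  assumes "tau > 0" "lam * (kappa tau)\<^sup>2 = 1" "tau_lo < tau" "tau < tau_hi"
  shows "\<exists>c C. c > 0 \<and> C > 0 \<and>
           (\<forall>\<phi>\<ge>0. c * exp (-tau_hi * \<phi>) \<le> tail \<phi> \<and> tail \<phi> \<le> C * exp (-tau_lo * \<phi>))"
proof -
  define t_lo where "t_lo = max tau_lo (tau / 2)"
  have t_lo: "0 < t_lo" "t_lo < tau" "tau_lo \<le> t_lo"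
    using assms by (auto simp: t_lo_def)
  have "lam * (kappa t_lo)\<^sup>2 < lam * (kappa tau)\<^sup>2"
    using t_lo lam by (intro mult_strict_left_mono kappa_sq_strict_mono)
  then obtain C where "C > 0" and upper: "\<And>\<phi>. tail \<phi> \<le> C * exp (-t_lo * \<phi>)"
    using tail_exp_upper_bound[of t_lo] t_lo assms(2) by auto
  have "lam * (kappa tau)\<^sup>2 < lam * (kappa tau_hi)\<^sup>2"
    using assms lam by (intro mult_strict_left_mono kappa_sq_strict_mono)
  then obtain c where "c > 0" and lower: "\<And>\<phi>. \<phi> \<ge> 0 \<Longrightarrow> c * exp (-tau_hi * \<phi>) \<le> tail \<phi>"
    using tail_exp_lower_bound[of tau_hi] assms by auto
  have "C * exp (-t_lo * \<phi>) \<le> C * exp (-tau_lo * \<phi>)" if "\<phi> \<ge> 0" for \<phi>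
    using t_lo(3) that \<open>C > 0\<close> by (simp add: mult_right_mono)
  then show ?thesis
    using upper lower \<open>c > 0\<close> \<open>C > 0\<close> by (meson order_trans)
qed

end

theorem lemma4p1:
  fixes Phi Phi' Phi'' W :: "real \<Rightarrow> real"
    and lam tau_plus tau_lo tau_hi :: real
  assumes d1: "\<And>x. x \<in> {-1..1} \<Longrightarrow> (Phi has_real_derivative Phi' x) (at x within {-1..1})"
    and d2: "\<And>x. x \<in> {-1..1} \<Longrightarrow> (Phi' has_real_derivative Phi'' x) (at x within {-1..1})"
    and c2: "continuous_on {-1..1} Phi''"
    and "Phi' (-1) = -1" and "Phi' 1 = 1"
    and "\<And>x. x \<in> {-1..1} \<Longrightarrow> Phi'' x \<ge> 0"
    and "Phi (-1) = Phi 1"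
    and "Phi'' (-1) < 1"
    and lam_def: "lam = Phi'' 1" and "0 < lam" and "lam < 1"
    and tau_pos: "tau_plus > 0"
    and tau_eq: "tau_plus\<^sup>2 = 2 * lam * (cosh tau_plus - 1)"
    and Wbdd: "bounded (range W)"
    and Wmono: "mono W"
    and Wsol: "\<And>\<phi>. W \<phi> = avgA (\<lambda>s. Phi' (avgA W s)) \<phi>"
    and Wtop: "(W \<longlongrightarrow> 1) at_top"
    and Wbot: "(W \<longlongrightarrow> -1) at_bot"
    and taus: "tau_lo < tau_plus" "tau_plus < tau_hi"
  shows "\<exists>c_lo c_hi. c_lo > 0 \<and> c_hi > 0 \<and>
           (\<forall>\<phi>\<ge>0. c_lo * exp (- tau_hi * \<phi>) \<le> Wsh \<phi> - W \<phi> \<and>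
                    Wsh \<phi> - W \<phi> \<le> c_hi * exp (- tau_lo * \<phi>))"
proof -
  interpret monotone_profile Phi' W lam
  proof
    show "continuous_on {-1..1} Phi'"
      unfolding continuous_on_eq_continuous_within using d2 DERIV_continuous by blast
    show "mono_on {-1..1} Phi'"
      using d2 \<open>\<And>x. x \<in> {-1..1} \<Longrightarrow> Phi'' x \<ge> 0\<close> by (rule mono_on_Icc_if_deriv_nonneg)
    show "(Phi' has_real_derivative lam) (at 1 within {-1..1})"
      using d2[of 1] lam_def by simp
  qed (use assms in auto)
  obtain c C where "c > 0" "C > 0"
    and "\<And>\<phi>. \<phi> \<ge> 0 \<Longrightarrow> c * exp (-tau_hi * \<phi>) \<le> tail \<phi> \<and> tail \<phi> \<le> C * exp (-tau_lo * \<phi>)"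
    using tail_exp_bounds[OF tau_pos kappa_sq_char_eq[OF tau_pos tau_eq] taus] by blast
  moreover have "Wsh \<phi> - W \<phi> = tail \<phi>" if "\<phi> \<ge> 0" for \<phi>
    using that by (simp add: Wsh_def tail_def)
  ultimately show ?thesis
    by (intro exI[of _ c] exI[of _ C]) auto
qed

end
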